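(* For each positive integer $n\ge 4$, there exists a family of $n$ digraphs of order $4^n$, each strongly connected and non symmetric, which are pairwise real strongly quasi-cospectral.
   Context: A sidigraph is a digraph (no loops, at most one arc from $u$ to $v$) with a sign $\pm1$ on each arc; its adjacency matrix has entry $\sigma(v_i,v_j)$ if there is an arc from $v_i$ to $v_j$ and $0$ otherwise, and its spectrum is the multiset of eigenvalues of this matrix. An (unsigned) digraph is identified with the sidigraph having all arcs positive. A sidigraph on a digraph $D$ is a sidigraph whose underlying digraph is $D$. Two (si)digraphs are cospectral if they have the same spectrum. The sign of a cycle is the product of its arc signs; a sidigraph is cycle balanced if every directed cycle is positive. A digraph is symmetric if whenever $(u,v)$ is an arc so is $(v,u)$; it is strongly connected in the usual sense. Two digraphs $D_1,D_2$ are real strongly quasi-cospectral if $D_1$ and $D_2$ are cospectral with all eigenvalues real, and there exist non cycle balanced sidigraphs $S_1$ on $D_1$ and $S_2$ on $D_2$ that are cospectral with all eigenvalues real. *)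

theory Defs
  imports Complex_Main "Jordan_Normal_Form.Char_Poly" "HOL-Computational_Algebra.Polynomial"
begin

text \<open>Digraphs on the vertex set {0..<N}: a set of arcs A with no loops
  (at most one arc from u to v is automatic for a set of pairs).\<close>
definition digraph :: "nat \<Rightarrow> (nat \<times> nat) set \<Rightarrow> bool" where
  "digraph N A \<longleftrightarrow> A \<subseteq> {0..<N} \<times> {0..<N} \<and> (\<forall>v. (v, v) \<notin> A)"

definition signing :: "(nat \<times> nat) set \<Rightarrow> (nat \<times> nat \<Rightarrow> int) \<Rightarrow> bool" where
  "signing A \<sigma> \<longleftrightarrow> (\<forall>a\<in>A. \<sigma> a = 1 \<or> \<sigma> a = -1)"

definition adj_mat :: "nat \<Rightarrow> (nat \<times> nat) set \<Rightarrow> (nat \<times> nat \<Rightarrow> int) \<Rightarrow> complex mat" where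
  "adj_mat N A \<sigma> = mat N N (\<lambda>(i, j). if (i, j) \<in> A then of_int (\<sigma> (i, j)) else 0)"

definition spec :: "complex mat \<Rightarrow> complex multiset" where
  "spec M = proots (char_poly M)"

definition real_spectrum :: "complex mat \<Rightarrow> bool" where
  "real_spectrum M \<longleftrightarrow> (\<forall>x\<in>#spec M. x \<in> \<real>)"

text \<open>Unsigned digraph = sidigraph with all arcs positive.\<close>
definition pos_sign :: "nat \<times> nat \<Rightarrow> int" where
  "pos_sign a = 1"

definition dcycle :: "(nat \<times> nat) set \<Rightarrow> nat list \<Rightarrow> bool" where
  "dcycle A vs \<longleftrightarrow> vs \<noteq> [] \<and> distinct vs \<and>
     (\<forall>i<length vs. (vs ! i, vs ! ((i + 1) mod length vs)) \<in> A)"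

definition cycle_sign :: "(nat \<times> nat \<Rightarrow> int) \<Rightarrow> nat list \<Rightarrow> int" where
  "cycle_sign \<sigma> vs = (\<Prod>i<length vs. \<sigma> (vs ! i, vs ! ((i + 1) mod length vs)))"

definition cycle_balanced :: "(nat \<times> nat) set \<Rightarrow> (nat \<times> nat \<Rightarrow> int) \<Rightarrow> bool" where
  "cycle_balanced A \<sigma> \<longleftrightarrow> (\<forall>vs. dcycle A vs \<longrightarrow> cycle_sign \<sigma> vs = 1)"

definition symmetric_digraph :: "(nat \<times> nat) set \<Rightarrow> bool" where
  "symmetric_digraph A \<longleftrightarrow> (\<forall>u v. (u, v) \<in> A \<longrightarrow> (v, u) \<in> A)"

definition strongly_connected :: "nat \<Rightarrow> (nat \<times> nat) set \<Rightarrow> bool" where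
  "strongly_connected N A \<longleftrightarrow> (\<forall>u\<in>{0..<N}. \<forall>v\<in>{0..<N}. (u, v) \<in> A\<^sup>*)"

definition isomorphic :: "nat \<Rightarrow> (nat \<times> nat) set \<Rightarrow> (nat \<times> nat) set \<Rightarrow> bool" where
  "isomorphic N A B \<longleftrightarrow> (\<exists>f. bij_betw f {0..<N} {0..<N} \<and>
     (\<forall>u\<in>{0..<N}. \<forall>v\<in>{0..<N}. (u, v) \<in> A \<longleftrightarrow> (f u, f v) \<in> B))"

definition real_cospectral :: "nat \<Rightarrow> (nat \<times> nat) set \<Rightarrow> (nat \<times> nat \<Rightarrow> int)
    \<Rightarrow> (nat \<times> nat) set \<Rightarrow> (nat \<times> nat \<Rightarrow> int) \<Rightarrow> bool" where
  "real_cospectral N A1 \<sigma>1 A2 \<sigma>2 \<longleftrightarrow>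
     spec (adj_mat N A1 \<sigma>1) = spec (adj_mat N A2 \<sigma>2) \<and>
     real_spectrum (adj_mat N A1 \<sigma>1) \<and> real_spectrum (adj_mat N A2 \<sigma>2)"

definition real_strongly_quasi_cospectral ::
    "nat \<Rightarrow> (nat \<times> nat) set \<Rightarrow> (nat \<times> nat) set \<Rightarrow> bool" where
  "real_strongly_quasi_cospectral N D1 D2 \<longleftrightarrow>
     real_cospectral N D1 pos_sign D2 pos_sign \<and>
     (\<exists>\<sigma>1 \<sigma>2. signing D1 \<sigma>1 \<and> signing D2 \<sigma>2 \<and>
        \<not> cycle_balanced D1 \<sigma>1 \<and> \<not> cycle_balanced D2 \<sigma>2 \<and>
        real_cospectral N D1 \<sigma>1 D2 \<sigma>2)"

end

theory Submission
  imports Defs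
begin

(* For 1 <= p <= n let G_p be the digraph on N = 4^n vertices with hub 0, L = n + 1, and arcs
   0 -> v for v <= p or v > L, v -> 0 for v > p, 1 -> v for p < v <= L, u -> p + 1 for 2 <= u <= p.
   Off the hub every arc goes from {1..p} to {p+1..L}, so that block of the adjacency matrix squares
   to zero and the characteristic polynomial is x^(N-3) (x^3 - a x - b), where a = N - 1 - L counts
   the 2-cycles and b = L - 1 the 3-cycles through the hub, independently of p. Negating the arcs off
   the hub negates b, the triangle 0 -> 1 -> p + 1 -> 0 becomes negative, and 27 b^2 <= 4 a^3 keeps
   all roots real. The hub has out-degree p + N - 1 - L, more than any other vertex, which tells the
   G_p apart. *)

lemma mult_minus_plus_square_zero_mat:
  fixes M :: "'a :: comm_ring_1 mat"
  assumes M: "M \<in> carrier_mat m m" and MM: "M * M = 0\<^sub>m m m"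
  shows "(x \<cdot>\<^sub>m 1\<^sub>m m - M) * (x \<cdot>\<^sub>m 1\<^sub>m m + M) = (x * x) \<cdot>\<^sub>m 1\<^sub>m m"
proof -
  have xM: "x \<cdot>\<^sub>m 1\<^sub>m m - M \<in> carrier_mat m m" using M by auto
  have "(x \<cdot>\<^sub>m 1\<^sub>m m - M) * (x \<cdot>\<^sub>m 1\<^sub>m m + M)
      = (x \<cdot>\<^sub>m 1\<^sub>m m - M) * (x \<cdot>\<^sub>m 1\<^sub>m m) + (x \<cdot>\<^sub>m 1\<^sub>m m - M) * M"
    using M by (intro mult_add_distrib_mat) auto
  also have "(x \<cdot>\<^sub>m 1\<^sub>m m - M) * (x \<cdot>\<^sub>m 1\<^sub>m m) = x \<cdot>\<^sub>m (x \<cdot>\<^sub>m 1\<^sub>m m - M)"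
    using mult_smult_distrib[OF xM one_carrier_mat, of x] right_mult_one_mat[OF xM] by simp
  also have "(x \<cdot>\<^sub>m 1\<^sub>m m - M) * M = x \<cdot>\<^sub>m M - M * M"
    using M mult_smult_assoc_mat[OF one_carrier_mat M, of x] by (subst minus_mult_distrib_mat) auto
  finally show ?thesis
    using M MM by (intro eq_matI) (auto simp: algebra_simps)
qed

lemma det_bordered_square_zero_mat:
  fixes R C M :: "'a :: idom mat"
  assumes R: "R \<in> carrier_mat 1 m" and C: "C \<in> carrier_mat m 1" and M: "M \<in> carrier_mat m m"
    and MM: "M * M = 0\<^sub>m m m"
  shows "det (four_block_mat (mat 1 1 (\<lambda>_. x)) (- R) (- C) (x \<cdot>\<^sub>m 1\<^sub>m m - M)) * x\<^sup>2
    = (x ^ 3 - x * (R * C) $$ (0, 0) - (R * (M * C)) $$ (0, 0)) * det (x \<cdot>\<^sub>m 1\<^sub>m m - M)"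
    (is "_ = ?c * _")
proof -
  define X where "X = four_block_mat (mat 1 1 (\<lambda>_. x)) (- R) (- C) (x \<cdot>\<^sub>m 1\<^sub>m m - M)"
  \<comment> \<open>Since \<open>(x I - M) (x I + M) = x\<^sup>2 I\<close>, the block \<open>(x I + M) C\<close> of \<open>Y\<close> clears the lower
      left block of \<open>X * Y\<close>.\<close>
  define Y where "Y = four_block_mat (mat 1 1 (\<lambda>_. x\<^sup>2)) (0\<^sub>m 1 m)
    ((x \<cdot>\<^sub>m 1\<^sub>m m + M) * C) (1\<^sub>m m)"
  have xM: "x \<cdot>\<^sub>m 1\<^sub>m m - M \<in> carrier_mat m m" using M by auto
  have xMC: "(x \<cdot>\<^sub>m 1\<^sub>m m + M) * C \<in> carrier_mat m 1" using M C by auto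
  have xMC_eq: "(x \<cdot>\<^sub>m 1\<^sub>m m + M) * C = x \<cdot>\<^sub>m C + M * C"
    using add_mult_distrib_mat[of "x \<cdot>\<^sub>m 1\<^sub>m m" m m M C 1] M C
      mult_smult_assoc_mat[OF one_carrier_mat C, of x] by simp
  have "(x \<cdot>\<^sub>m 1\<^sub>m m - M) * ((x \<cdot>\<^sub>m 1\<^sub>m m + M) * C) = (x * x) \<cdot>\<^sub>m C"
    using M C xM mult_smult_assoc_mat[OF one_carrier_mat C, of "x * x"]
    by (simp add: assoc_mult_mat[symmetric, of _ m m _ m _ 1] mult_minus_plus_square_zero_mat[OF M MM])
  then have "- C * mat 1 1 (\<lambda>_. x\<^sup>2) + (x \<cdot>\<^sub>m 1\<^sub>m m - M) * ((x \<cdot>\<^sub>m 1\<^sub>m m + M) * C) = 0\<^sub>m m 1"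
    using C by (intro eq_matI) (auto simp: scalar_prod_def power2_eq_square)
  moreover have "mat 1 1 (\<lambda>_. x) * mat 1 1 (\<lambda>_. x\<^sup>2) + (- R) * ((x \<cdot>\<^sub>m 1\<^sub>m m + M) * C)
      = mat 1 1 (\<lambda>_. ?c)"
    using R C M unfolding xMC_eq
    by (intro eq_matI) (auto simp: scalar_prod_def power3_eq_cube power2_eq_square
      distrib_left sum.distrib sum_distrib_left mult.left_commute)
  ultimately have "X * Y = four_block_mat
      (mat 1 1 (\<lambda>_. ?c)) (- R)
      (0\<^sub>m m 1) (x \<cdot>\<^sub>m 1\<^sub>m m - M)"
    unfolding X_def Y_def using R C M xM xMC
    by (subst mult_four_block_mat[of _ 1 1 _ m _ m]) (auto simp del: uminus_mult_left_mat)
  then have "det (X * Y) = ?c * det (x \<cdot>\<^sub>m 1\<^sub>m m - M)"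
    using R xM by (simp add: det_four_block_mat_lower_left_zero_col det_single)
  moreover have "det Y = x\<^sup>2"
    unfolding Y_def using xMC
    by (subst det_four_block_mat_upper_right_zero[of _ 1 _ m]) (auto simp: det_single)
  moreover have "det (X * Y) = det X * det Y"
    unfolding X_def Y_def using xM by (intro det_mult[of _ "1 + m"] four_block_carrier_mat) auto
  ultimately show ?thesis unfolding X_def by simp
qed

lemma det_smult_one_minus_strictly_upper_triangular:
  fixes M :: "'a :: comm_ring_1 mat"
  assumes M: "M \<in> carrier_mat m m" and ut: "upper_triangular M"
    and diag: "\<forall>i<m. M $$ (i, i) = 0"
  shows "det (x \<cdot>\<^sub>m 1\<^sub>m m - M) = x ^ m"
proof -
  have "upper_triangular (x \<cdot>\<^sub>m 1\<^sub>m m - M)"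
    using ut M unfolding upper_triangular_def by auto
  then have "det (x \<cdot>\<^sub>m 1\<^sub>m m - M) = prod_list (diag_mat (x \<cdot>\<^sub>m 1\<^sub>m m - M))"
    using M by (intro det_upper_triangular) auto
  also have "diag_mat (x \<cdot>\<^sub>m 1\<^sub>m m - M) = replicate m x"
    using M diag by (intro nth_equalityI) (auto simp: diag_mat_def)
  finally show ?thesis by simp
qed

lemma char_poly_bordered_square_zero_mat:
  fixes R C M :: "'a :: field_char_0 mat"
  assumes R: "R \<in> carrier_mat 1 m" and C: "C \<in> carrier_mat m 1" and M: "M \<in> carrier_mat m m"
    and MM: "M * M = 0\<^sub>m m m" and ut: "upper_triangular M" and diag: "\<forall>i<m. M $$ (i, i) = 0"
    and m: "2 \<le> m"
  shows "char_poly (four_block_mat (0\<^sub>m 1 1) R C M)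
    = monom 1 (m - 2) * [:- (R * (M * C)) $$ (0, 0), - (R * C) $$ (0, 0), 0, 1:]"
    (is "char_poly ?A = monom 1 (m - 2) * ?cubic")
proof -
  have A: "?A \<in> carrier_mat (1 + m) (1 + m)"
    using R C M by (intro four_block_carrier_mat) auto
  have char_matrix_eq: "- char_matrix ?A x = four_block_mat (mat 1 1 (\<lambda>_. x)) (- R) (- C) (x \<cdot>\<^sub>m 1\<^sub>m m - M)"
    for x
    using R C M A by (intro eq_matI) (auto simp: char_matrix_def four_block_mat_def)
  have "poly (char_poly ?A) x * x\<^sup>2
      = (x ^ 3 - x * (R * C) $$ (0, 0) - (R * (M * C)) $$ (0, 0)) * x ^ m" for x
    unfolding char_poly_matrix[OF A] char_matrix_eq det_bordered_square_zero_mat[OF R C M MM]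
      det_smult_one_minus_strictly_upper_triangular[OF M ut diag] ..
  then have "poly (char_poly ?A * monom 1 2) x = poly (monom 1 m * ?cubic) x" for x
    by (simp add: poly_monom algebra_simps power3_eq_cube)
  then have "char_poly ?A * monom 1 2 = monom 1 m * ?cubic"
    by (simp add: poly_eq_poly_eq_iff[symmetric] fun_eq_iff)
  also have "monom 1 m = monom 1 (m - 2) * (monom 1 2 :: 'a poly)"
    using m by (simp add: mult_monom Suc_diff_Suc numeral_2_eq_2)
  finally have "char_poly ?A * monom 1 2 = monom 1 (m - 2) * ?cubic * monom 1 2"
    by (simp only: ac_simps)
  then show ?thesis by simp
qed

lemma char_poly_square_zero_off_first:
  fixes A :: "'a :: field_char_0 mat"
  assumes A: "A \<in> carrier_mat (Suc m) (Suc m)" and A00: "A $$ (0, 0) = 0"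
    and square_zero: "\<And>i j k. i < m \<Longrightarrow> j < m \<Longrightarrow> k < m \<Longrightarrow>
      A $$ (Suc i, Suc j) * A $$ (Suc j, Suc k) = 0"
    and upper: "\<And>i j. j \<le> i \<Longrightarrow> i < m \<Longrightarrow> A $$ (Suc i, Suc j) = 0"
    and m: "2 \<le> m"
  shows "char_poly A = monom 1 (m - 2) *
    [:- (\<Sum>j<m. \<Sum>k<m. A $$ (0, Suc j) * A $$ (Suc j, Suc k) * A $$ (Suc k, 0)),
      - (\<Sum>j<m. A $$ (0, Suc j) * A $$ (Suc j, 0)), 0, 1:]"
proof -
  obtain A1 R C M where split: "split_block A 1 1 = (A1, R, C, M)"
    by (metis prod_cases4)
  have R: "R \<in> carrier_mat 1 m" and C: "C \<in> carrier_mat m 1" and M: "M \<in> carrier_mat m m"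
    and A_eq: "A = four_block_mat A1 R C M"
    using split_block[OF split, of m m] A by auto
  have entries: "A1 = 0\<^sub>m 1 1" "\<And>j. j < m \<Longrightarrow> R $$ (0, j) = A $$ (0, Suc j)"
    "\<And>i. i < m \<Longrightarrow> C $$ (i, 0) = A $$ (Suc i, 0)"
    "\<And>i j. i < m \<Longrightarrow> j < m \<Longrightarrow> M $$ (i, j) = A $$ (Suc i, Suc j)"
    using split A A00 by (auto simp: split_block_def)
  have "M * M = 0\<^sub>m m m"
    using M square_zero by (intro eq_matI) (auto simp: entries scalar_prod_def intro!: sum.neutral)
  moreover have "upper_triangular M" "\<forall>i<m. M $$ (i, i) = 0"
    using M upper by (auto simp: upper_triangular_def entries)
  moreover have "(R * C) $$ (0, 0) = (\<Sum>j<m. A $$ (0, Suc j) * A $$ (Suc j, 0))"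
    using R C by (simp add: entries scalar_prod_def atLeast0LessThan)
  moreover have "(R * (M * C)) $$ (0, 0)
      = (\<Sum>j<m. \<Sum>k<m. A $$ (0, Suc j) * A $$ (Suc j, Suc k) * A $$ (Suc k, 0))"
    using R C M by (simp add: entries scalar_prod_def atLeast0LessThan sum_distrib_left mult.assoc)
  ultimately show ?thesis
    unfolding A_eq entries(1) using char_poly_bordered_square_zero_mat[OF R C M _ _ _ m] by simp
qed

lemma cubic_root_real:
  fixes z :: complex and a b :: real
  assumes root: "z ^ 3 - of_real a * z - of_real b = 0" and disc: "27 * b\<^sup>2 \<le> 4 * a ^ 3"
  shows "z \<in> \<real>"
proof (rule ccontr)
  assume "z \<notin> \<real>"
  obtain u v where z: "z = Complex u v" by (cases z)
  with \<open>z \<notin> \<real>\<close> have v: "v \<noteq> 0" by (auto simp: complex_is_Real_iff)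
  have re: "u ^ 3 - 3 * u * v\<^sup>2 - a * u - b = 0" and im: "3 * u\<^sup>2 * v - v ^ 3 - a * v = 0"
    using root unfolding z complex_eq_iff
    by (simp_all add: power3_eq_cube power2_eq_square algebra_simps)
  have "v * (3 * u\<^sup>2 - v\<^sup>2 - a) = 0"
    using im by (simp add: power3_eq_cube power2_eq_square algebra_simps)
  then have v2: "v\<^sup>2 = 3 * u\<^sup>2 - a" using v by simp
  have "b = u ^ 3 - 3 * u * v\<^sup>2 - a * u" using re by simp
  also have "\<dots> = 2 * u * (a - 4 * u\<^sup>2)"
    unfolding v2 by (simp add: power2_eq_square power3_eq_cube algebra_simps)
  finally have b: "b = 2 * u * (a - 4 * u\<^sup>2)" .
  have "v\<^sup>2 > 0" using v by simp
  then have pos: "3 * u\<^sup>2 - a > 0" using v2 by linarith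
  have "27 * b\<^sup>2 - 4 * a ^ 3 = 4 * (3 * u\<^sup>2 - a) * (12 * u\<^sup>2 - a)\<^sup>2"
    unfolding b by (simp add: power2_eq_square power3_eq_cube algebra_simps)
  moreover have "12 * u\<^sup>2 - a > 0" using pos zero_le_power2[of u] by linarith
  ultimately have "27 * b\<^sup>2 - 4 * a ^ 3 > 0" using pos by simp
  then show False using disc by simp
qed

lemma real_spectrum_if_char_poly_cubic:
  fixes A :: "complex mat" and a b :: real
  assumes char_poly: "char_poly A = monom 1 k * [:- of_real b, - of_real a, 0, 1:]"
    and disc: "27 * b\<^sup>2 \<le> 4 * a ^ 3"
  shows "real_spectrum A"
  unfolding real_spectrum_def
proof
  fix z assume z: "z \<in># spec A"
  then have "char_poly A \<noteq> 0" by (auto simp: spec_def)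
  with z have "poly (char_poly A) z = 0" by (simp add: spec_def)
  then have "z ^ k * (z ^ 3 - of_real a * z - of_real b) = 0"
    unfolding char_poly by (simp add: poly_monom algebra_simps power3_eq_cube)
  then show "z \<in> \<real>" using cubic_root_real[OF _ disc] by auto
qed

lemma index_adj_mat:
  "u < N \<Longrightarrow> v < N \<Longrightarrow>
    adj_mat N A \<sigma> $$ (u, v) = (if (u, v) \<in> A then of_int (\<sigma> (u, v)) else 0)"
  by (simp add: adj_mat_def)

lemma sum_if_const_card:
  fixes m :: nat
  shows "(\<Sum>j<m. if P j then c else 0) = of_nat (card {j. j < m \<and> P j}) * (c :: 'a :: comm_semiring_1)"
  using sum.inter_filter[of "{..<m}" "\<lambda>_. c" P] by simp

definition out_degree :: "(nat \<times> nat) set \<Rightarrow> nat \<Rightarrow> nat" where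
  "out_degree A v = card {w. (v, w) \<in> A}"

lemma isomorphic_out_degree:
  assumes iso: "isomorphic N A B" and A: "digraph N A" and B: "digraph N B" and v: "v < N"
  shows "\<exists>w<N. out_degree B w = out_degree A v"
proof -
  obtain f where bij: "bij_betw f {0..<N} {0..<N}"
    and arcs: "\<forall>u\<in>{0..<N}. \<forall>w\<in>{0..<N}. (u, w) \<in> A \<longleftrightarrow> (f u, f w) \<in> B"
    using iso unfolding isomorphic_def by blast
  have out_A: "{w. (v, w) \<in> A} \<subseteq> {0..<N}" and out_B: "{w. (f v, w) \<in> B} \<subseteq> {0..<N}"
    using A B unfolding digraph_def by auto
  have fv: "f v < N" using bij v by (auto dest: bij_betwE)
  have "{w. (f v, w) \<in> B} = f ` {w. (v, w) \<in> A}"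
  proof
    show "{w. (f v, w) \<in> B} \<subseteq> f ` {w. (v, w) \<in> A}"
    proof
      fix w' assume w': "w' \<in> {w. (f v, w) \<in> B}"
      then have "w' \<in> f ` {0..<N}"
        unfolding bij_betw_imp_surj_on[OF bij] using out_B by blast
      then obtain w where "w < N" "w' = f w" by auto
      then show "w' \<in> f ` {w. (v, w) \<in> A}" using arcs v w' by auto
    qed
    show "f ` {w. (v, w) \<in> A} \<subseteq> {w. (f v, w) \<in> B}"
      using arcs v out_A by auto
  qed
  moreover have "inj_on f {w. (v, w) \<in> A}"
    using out_A bij_betw_imp_inj_on[OF bij] inj_on_subset by blast
  ultimately have "out_degree B (f v) = out_degree A v"
    unfolding out_degree_def by (simp add: card_image)
  then show ?thesis using fv by blast
qed

lemma dcycle_triangle: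
  "distinct [a, b, c] \<Longrightarrow> (a, b) \<in> A \<Longrightarrow> (b, c) \<in> A \<Longrightarrow> (c, a) \<in> A \<Longrightarrow> dcycle A [a, b, c]"
  unfolding dcycle_def by (auto simp: less_Suc_eq)

lemma cycle_sign_triangle: "cycle_sign \<sigma> [a, b, c] = \<sigma> (a, b) * \<sigma> (b, c) * \<sigma> (c, a)"
  by (simp add: cycle_sign_def lessThan_Suc)

definition hub_digraph :: "nat \<Rightarrow> nat \<Rightarrow> nat \<Rightarrow> (nat \<times> nat) set" where
  "hub_digraph N L p = {(u, v).
     u = 0 \<and> (1 \<le> v \<and> v \<le> p \<or> L < v \<and> v < N) \<or> v = 0 \<and> p < u \<and> u < N \<or>
     u = 1 \<and> p < v \<and> v \<le> L \<or> 2 \<le> u \<and> u \<le> p \<and> v = Suc p}"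

fun hub_sign :: "int \<Rightarrow> nat \<times> nat \<Rightarrow> int" where
  "hub_sign s (u, v) = (if u = 0 \<or> v = 0 then 1 else s)"

locale hub_construction =
  fixes N L p :: nat
  assumes p_pos: "1 \<le> p" and p_less_L: "p < L" and L_less_N: "L < N"
begin

abbreviation hub_adj :: "int \<Rightarrow> complex mat" where
  "hub_adj s \<equiv> adj_mat N (hub_digraph N L p) (hub_sign s)"

lemma arc_from_hub_iff: "(0, v) \<in> hub_digraph N L p \<longleftrightarrow> 1 \<le> v \<and> v \<le> p \<or> L < v \<and> v < N"
  by (simp add: hub_digraph_def)

lemma arc_to_hub_iff: "(u, 0) \<in> hub_digraph N L p \<longleftrightarrow> p < u \<and> u < N"
  using p_pos by (auto simp: hub_digraph_def)

lemma arc_off_hub_iff: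
  "(Suc i, Suc k) \<in> hub_digraph N L p \<longleftrightarrow> i = 0 \<and> p \<le> k \<and> k < L \<or> 1 \<le> i \<and> i < p \<and> k = p"
  by (auto simp: hub_digraph_def)

lemma two_cycles_through_hub:
  "(\<Sum>j<N - 1. hub_adj s $$ (0, Suc j) * hub_adj s $$ (Suc j, 0)) = of_nat (N - 1 - L)"
proof -
  have "(\<Sum>j<N - 1. hub_adj s $$ (0, Suc j) * hub_adj s $$ (Suc j, 0))
      = (\<Sum>j<N - 1. if L \<le> j then 1 else 0)"
    using p_less_L L_less_N
    by (intro sum.cong) (auto simp: index_adj_mat arc_from_hub_iff arc_to_hub_iff)
  also have "\<dots> = of_nat (N - 1 - L)"
  proof -
    have support: "{j. j < N - 1 \<and> L \<le> j} = {L..<N - 1}" by auto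
    show ?thesis unfolding sum_if_const_card support by simp
  qed
  finally show ?thesis .
qed

lemma two_step_paths_to_hub:
  assumes "j < N - 1"
  shows "(\<Sum>k<N - 1. hub_adj s $$ (Suc j, Suc k) * hub_adj s $$ (Suc k, 0))
    = of_int s * of_nat (if j = 0 then L - p else if j < p then 1 else 0)"
proof -
  have "(\<Sum>k<N - 1. hub_adj s $$ (Suc j, Suc k) * hub_adj s $$ (Suc k, 0))
      = (\<Sum>k<N - 1. if j = 0 \<and> p \<le> k \<and> k < L \<or> 1 \<le> j \<and> j < p \<and> k = p then of_int s else 0)"
    using assms p_less_L L_less_N
    by (intro sum.cong) (auto simp: index_adj_mat arc_off_hub_iff arc_to_hub_iff)
  also have "\<dots> = of_int s * of_nat (if j = 0 then L - p else if j < p then 1 else 0)"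
  proof -
    have "{k. k < N - 1 \<and> (j = 0 \<and> p \<le> k \<and> k < L \<or> 1 \<le> j \<and> j < p \<and> k = p)}
        = (if j = 0 then {p..<L} else if j < p then {p} else {})"
      using p_less_L L_less_N by auto
    then show ?thesis by (simp only: sum_if_const_card mult.commute) simp
  qed
  finally show ?thesis .
qed

lemma three_cycles_through_hub:
  "(\<Sum>j<N - 1. \<Sum>k<N - 1. hub_adj s $$ (0, Suc j) * hub_adj s $$ (Suc j, Suc k)
      * hub_adj s $$ (Suc k, 0)) = of_int s * of_nat (L - 1)"
proof -
  let ?paths = "\<lambda>j. if j = 0 then L - p else if j < p then 1 else 0"
  have "(\<Sum>j<N - 1. \<Sum>k<N - 1. hub_adj s $$ (0, Suc j) * hub_adj s $$ (Suc j, Suc k)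
        * hub_adj s $$ (Suc k, 0))
      = (\<Sum>j<N - 1. hub_adj s $$ (0, Suc j)
        * (\<Sum>k<N - 1. hub_adj s $$ (Suc j, Suc k) * hub_adj s $$ (Suc k, 0)))"
    by (simp add: sum_distrib_left mult.assoc)
  also have "\<dots> = (\<Sum>j<N - 1. of_int s * of_nat (?paths j))"
  proof (intro sum.cong refl)
    fix j assume "j \<in> {..<N - 1}"
    then have j: "j < N - 1" by simp
    then show "hub_adj s $$ (0, Suc j)
        * (\<Sum>k<N - 1. hub_adj s $$ (Suc j, Suc k) * hub_adj s $$ (Suc k, 0))
      = of_int s * of_nat (?paths j)"
      unfolding two_step_paths_to_hub[OF j]
      using p_pos p_less_L by (auto simp: index_adj_mat arc_from_hub_iff)
  qed
  also have "\<dots> = of_int s * of_nat (\<Sum>j<N - 1. ?paths j)"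
    by (simp add: sum_distrib_left)
  also have "(\<Sum>j<N - 1. ?paths j) = L - 1"
  proof -
    have "{j. j < N - 1 \<and> 1 \<le> j \<and> j < p} = {1..<p}" using p_less_L L_less_N by auto
    then have card: "card {j. j < N - 1 \<and> 1 \<le> j \<and> j < p} = p - 1" by simp
    have "{j. j = 0 \<and> j < N - 1} = {0}" using p_less_L L_less_N by auto
    then have card0: "card {j. j = 0 \<and> j < N - 1} = 1" by simp
    have "(\<Sum>j<N - 1. ?paths j)
        = (\<Sum>j<N - 1. (if j = 0 then L - p else 0) + (if 1 \<le> j \<and> j < p then 1 else 0))"
      by (intro sum.cong) auto
    also have "\<dots> = (L - p) + (p - 1)"
      using card card0 by (simp add: sum.distrib sum_if_const_card)
    finally show ?thesis using p_pos p_less_L by simp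
  qed
  finally show ?thesis .
qed

lemma char_poly_adj:
  "char_poly (hub_adj s)
    = monom 1 (N - 3) * [:- (of_int s * of_nat (L - 1)), - of_nat (N - 1 - L), 0, 1:]"
proof -
  obtain m where N: "Suc m = N" using L_less_N by (cases N) auto
  have "hub_adj s \<in> carrier_mat (Suc m) (Suc m)" by (simp add: adj_mat_def N)
  moreover have "hub_adj s $$ (0, 0) = 0" using L_less_N by (simp add: index_adj_mat arc_to_hub_iff)
  moreover have "hub_adj s $$ (Suc i, Suc j) * hub_adj s $$ (Suc j, Suc k) = 0"
    if "i < m" "j < m" "k < m" for i j k
    using that N p_pos by (auto simp: index_adj_mat arc_off_hub_iff)
  moreover have "hub_adj s $$ (Suc i, Suc j) = 0" if "j \<le> i" "i < m" for i j
    using that N p_pos by (auto simp: index_adj_mat arc_off_hub_iff)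
  moreover have "2 \<le> m" using p_pos p_less_L L_less_N N by simp
  ultimately have "char_poly (hub_adj s) = monom 1 (m - 2) *
    [:- (\<Sum>j<m. \<Sum>k<m. hub_adj s $$ (0, Suc j) * hub_adj s $$ (Suc j, Suc k) * hub_adj s $$ (Suc k, 0)),
      - (\<Sum>j<m. hub_adj s $$ (0, Suc j) * hub_adj s $$ (Suc j, 0)), 0, 1:]"
    by (rule char_poly_square_zero_off_first)
  moreover have "m = N - 1" "m - 2 = N - 3" using N by auto
  ultimately show ?thesis using two_cycles_through_hub[of s] three_cycles_through_hub[of s] by simp
qed

lemma out_degree_hub: "out_degree (hub_digraph N L p) 0 = p + (N - 1 - L)"
proof -
  have "{w. (0, w) \<in> hub_digraph N L p} = {1..p} \<union> {L<..<N}" by (auto simp: arc_from_hub_iff)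
  moreover have "{1..p} \<inter> {L<..<N} = {}" using p_less_L by auto
  ultimately show ?thesis unfolding out_degree_def by (simp add: card_Un_disjoint)
qed

lemma out_degree_non_hub: "v \<noteq> 0 \<Longrightarrow> out_degree (hub_digraph N L p) v \<le> Suc L"
proof -
  assume "v \<noteq> 0"
  then have "{w. (v, w) \<in> hub_digraph N L p} \<subseteq> {0..L}"
    using p_less_L by (auto simp: hub_digraph_def)
  then have "out_degree (hub_digraph N L p) v \<le> card {0..L}"
    unfolding out_degree_def by (intro card_mono) auto
  then show ?thesis by simp
qed

lemma is_digraph: "digraph N (hub_digraph N L p)"
  using p_pos p_less_L L_less_N unfolding digraph_def hub_digraph_def by auto

lemma not_symmetric: "\<not> symmetric_digraph (hub_digraph N L p)"
  using p_pos arc_from_hub_iff[of 1] arc_to_hub_iff[of 1] unfolding symmetric_digraph_def by auto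

lemma not_cycle_balanced: "\<not> cycle_balanced (hub_digraph N L p) (hub_sign (-1))"
proof -
  have "dcycle (hub_digraph N L p) [0, 1, Suc p]"
    using p_pos p_less_L L_less_N by (intro dcycle_triangle) (auto simp: hub_digraph_def)
  moreover have "cycle_sign (hub_sign (-1)) [0, 1, Suc p] = -1"
    by (simp add: cycle_sign_triangle)
  ultimately show ?thesis unfolding cycle_balanced_def by force
qed

lemma is_strongly_connected: "strongly_connected N (hub_digraph N L p)"
proof -
  let ?G = "hub_digraph N L p"
  have to_hub: "(u, 0) \<in> ?G\<^sup>*" if "u < N" for u
  proof -
    have "(Suc p, 0) \<in> ?G" using p_less_L L_less_N by (simp add: hub_digraph_def)
    moreover have "u = 0 \<or> (u, 0) \<in> ?G \<or> (u, Suc p) \<in> ?G"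
      using that p_pos p_less_L by (auto simp: hub_digraph_def)
    ultimately show ?thesis by (meson converse_rtrancl_into_rtrancl r_into_rtrancl rtrancl.rtrancl_refl)
  qed
  have from_hub: "(0, v) \<in> ?G\<^sup>*" if "v < N" for v
  proof -
    have "(0, 1) \<in> ?G" using p_pos by (simp add: hub_digraph_def)
    moreover have "v = 0 \<or> (0, v) \<in> ?G \<or> (1, v) \<in> ?G"
      using that p_pos by (auto simp: hub_digraph_def)
    ultimately show ?thesis by (meson converse_rtrancl_into_rtrancl r_into_rtrancl rtrancl.rtrancl_refl)
  qed
  show ?thesis
    unfolding strongly_connected_def using to_hub from_hub by (meson atLeastLessThan_iff rtrancl_trans)
qed

end

lemma signing_hub_sign:
  assumes "s = 1 \<or> s = -1"
  shows "signing A (hub_sign s)"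
  unfolding signing_def
proof
  fix a :: "nat \<times> nat"
  show "hub_sign s a = 1 \<or> hub_sign s a = -1" using assms by (cases a) auto
qed

lemma hub_sign_one: "hub_sign 1 = pos_sign"
proof
  fix a :: "nat \<times> nat"
  show "hub_sign 1 a = pos_sign a" by (cases a) (simp add: pos_sign_def)
qed

lemma hub_real_strongly_quasi_cospectral:
  assumes p: "hub_construction N L p" and q: "hub_construction N L q"
    and disc: "27 * (L - 1)\<^sup>2 \<le> 4 * (N - 1 - L) ^ 3"
  shows "real_strongly_quasi_cospectral N (hub_digraph N L p) (hub_digraph N L q)"
proof -
  have real: "real_spectrum (adj_mat N (hub_digraph N L r) (hub_sign s))"
    if r: "hub_construction N L r" and s: "s = 1 \<or> s = -1" for r s
  proof (rule real_spectrum_if_char_poly_cubic)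
    show "char_poly (adj_mat N (hub_digraph N L r) (hub_sign s)) = monom 1 (N - 3) *
      [:- of_real (of_int s * real (L - 1)), - of_real (real (N - 1 - L)), 0, 1:]"
      using hub_construction.char_poly_adj[OF r] by simp
    from disc have "real (27 * (L - 1)\<^sup>2) \<le> real (4 * (N - 1 - L) ^ 3)"
      by (simp only: of_nat_le_iff)
    then show "27 * (of_int s * real (L - 1))\<^sup>2 \<le> 4 * real (N - 1 - L) ^ 3"
      using s by (auto simp: power_mult_distrib)
  qed
  have "spec (adj_mat N (hub_digraph N L p) (hub_sign s))
      = spec (adj_mat N (hub_digraph N L q) (hub_sign s))" for s
    unfolding spec_def hub_construction.char_poly_adj[OF p] hub_construction.char_poly_adj[OF q] ..
  then show ?thesis
    unfolding real_strongly_quasi_cospectral_def real_cospectral_def hub_sign_one[symmetric]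
    using real[OF p] real[OF q] signing_hub_sign[of "-1"]
      hub_construction.not_cycle_balanced[OF p] hub_construction.not_cycle_balanced[OF q]
    by blast
qed

lemma hub_not_isomorphic:
  assumes p: "hub_construction N L p" and q: "hub_construction N L q" and "p \<noteq> q"
    and large: "2 * Suc L \<le> N"
  shows "\<not> isomorphic N (hub_digraph N L p) (hub_digraph N L q)"
proof
  assume "isomorphic N (hub_digraph N L p) (hub_digraph N L q)"
  then obtain v where v: "out_degree (hub_digraph N L q) v = p + (N - 1 - L)"
    using isomorphic_out_degree[OF _ hub_construction.is_digraph[OF p]
        hub_construction.is_digraph[OF q], of 0]
      hub_construction.out_degree_hub[OF p] large by auto
  show False
  proof (cases "v = 0")
    case True
    then show False using v hub_construction.out_degree_hub[OF q] \<open>p \<noteq> q\<close> by simp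
  next
    case False
    then have "out_degree (hub_digraph N L q) v \<le> Suc L"
      by (rule hub_construction.out_degree_non_hub[OF q])
    moreover have "Suc L < p + (N - 1 - L)" using hub_construction.p_pos[OF p] large by simp
    ultimately show False using v by simp
  qed
qed

lemma cube_dominates_square:
  fixes n x :: nat
  assumes "n \<le> x" and "7 \<le> x"
  shows "27 * n\<^sup>2 \<le> 4 * x ^ 3"
proof -
  have "27 * n\<^sup>2 \<le> 27 * x\<^sup>2" using assms(1) by (simp add: power_mono)
  also have "\<dots> \<le> (4 * x) * x\<^sup>2" using assms(2) by (intro mult_right_mono) auto
  also have "\<dots> = 4 * x ^ 3" by (simp add: power2_eq_square power3_eq_cube)
  finally show ?thesis .
qed

lemma sixteen_mult_le_four_power: "4 \<le> n \<Longrightarrow> 16 * n \<le> (4::nat) ^ n"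
  by (induction n rule: nat_induct_at_least) simp_all

theorem theorem2p16:
  fixes n :: nat
  assumes "n \<ge> 4"
  shows "\<exists>D :: nat \<Rightarrow> (nat \<times> nat) set.
    (\<forall>i<n. digraph (4 ^ n) (D i) \<and> strongly_connected (4 ^ n) (D i)
            \<and> \<not> symmetric_digraph (D i)) \<and>
    (\<forall>i<n. \<forall>j<n. i \<noteq> j \<longrightarrow>
        \<not> isomorphic (4 ^ n) (D i) (D j) \<and>
        real_strongly_quasi_cospectral (4 ^ n) (D i) (D j))"
proof -
  define N where "N = (4::nat) ^ n"
  define L where "L = Suc n"
  define D where "D i = hub_digraph N L (Suc i)" for i
  have large: "16 * n \<le> N" unfolding N_def using assms by (rule sixteen_mult_le_four_power)
  have hub: "hub_construction N L (Suc i)" if "i < n" for i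
    unfolding hub_construction_def L_def using that assms large by simp
  have "27 * (L - 1)\<^sup>2 \<le> 4 * (N - 1 - L) ^ 3"
    using assms large by (intro cube_dominates_square) (simp_all add: L_def)
  then have "real_strongly_quasi_cospectral N (D i) (D j)" if "i < n" "j < n" for i j
    unfolding D_def using hub that by (intro hub_real_strongly_quasi_cospectral)
  moreover have "\<not> isomorphic N (D i) (D j)" if "i < n" "j < n" "i \<noteq> j" for i j
    unfolding D_def using hub that assms large by (intro hub_not_isomorphic) (simp_all add: L_def)
  moreover have "digraph N (D i) \<and> strongly_connected N (D i) \<and> \<not> symmetric_digraph (D i)"
    if "i < n" for i
    unfolding D_def using hub_construction.is_digraph hub_construction.is_strongly_connected
      hub_construction.not_symmetric hub[OF that] by blast
  ultimately show ?thesis unfolding N_def[symmetric] by blast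
qed

end
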